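(* Let $X$ be a nonempty set and $d$ a triangular symmetric on $X$ such that $(X,d)$ is 0-complete. Let $T:X\to X$ be $d$-asymptotic, i.e. $\lim_n d(T^nx,T^{n+1}x)=0$ for all $x\in X$. Let $G\in\{M_1,M_2,M_3\}$ and suppose $T$ is $(d,G;\varphi)$-contractive, i.e. $d(Tx,Ty)\le\varphi(G(x,y))$ for all $x,y\in X$, for some nearly right admissible normal function $\varphi:[0,\infty)\to[0,\infty)$. Then $T$ is a global Picard operator (modulo $d$).
   Context: A symmetric on $X$ is a map $d:X\times X\to[0,\infty)$ with $d(x,y)=d(y,x)$; it is triangular if $d(x,z)\le d(x,y)+d(y,z)$ for all $x,y,z$. A sequence $(x_n)$ $0d$-converges to $x$ if $d(x_n,x)\to0$; it is $0d$-convergent if such $x$ exists. It is $0d$-Cauchy if for every $\varepsilon>0$ there is $j$ with $d(x_m,x_n)<\varepsilon$ whenever $j\le m<n$. $(X,d)$ is 0-complete if every $0d$-Cauchy sequence is $0d$-convergent. A subset $Y\neq\emptyset$ is $d$-singleton if $d(y_1,y_2)=0$ for all $y_1,y_2\in Y$. A point $z$ is $d$-fixed if $d(z,Tz)=0$; $\mathrm{Fix}(T;d)$ is the set of such points. $x$ is a Picard point (modulo $(d,T)$) if $(T^nx)$ is $0d$-convergent and every point to which it $0d$-converges lies in $\mathrm{Fix}(T;d)$. $T$ is a Picard operator (modulo $d$) if every $x\in X$ is a Picard point, and a global Picard operator (modulo $d$) if moreover $\mathrm{Fix}(T;d)$ is $d$-singleton. Notation: $M_1(x,y)=d(x,y)$,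 $H(x,y)=\max\{d(x,Tx),d(y,Ty)\}$, $L(x,y)=\frac12[d(x,Ty)+d(Tx,y)]$, $M_2=\max\{M_1,H\}$, $M_3=\max\{M_1,H,L\}$. A function $\varphi:[0,\infty)\to[0,\infty)$ is normal if $\varphi(0)=0$ and $\varphi(t)<t$ for $t>0$. For $s>0$, $L_+\varphi(s)=\max\{\limsup_{t\to s+}\varphi(t),\varphi(s)\}$. A normal $\varphi$ is nearly right admissible if there is a countable $Q\subseteq(0,\infty)$ with $L_+\varphi(s)<s$ (equivalently $\limsup_{t\to s+}\varphi(t)<s$) for all $s\in(0,\infty)\setminus Q$. *)

theory Defs
  imports "HOL-Analysis.Analysis"
begin

text \<open>The underlying nonempty set X is modelled as a type 'a (types are nonempty).\<close>

definition symmetric_on :: "('a \<Rightarrow> 'a \<Rightarrow> real) \<Rightarrow> bool" where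
  "symmetric_on d \<longleftrightarrow> (\<forall>x y. 0 \<le> d x y) \<and> (\<forall>x y. d x y = d y x)"

definition triangular :: "('a \<Rightarrow> 'a \<Rightarrow> real) \<Rightarrow> bool" where
  "triangular d \<longleftrightarrow> (\<forall>x y z. d x z \<le> d x y + d y z)"

definition zd_converges :: "('a \<Rightarrow> 'a \<Rightarrow> real) \<Rightarrow> (nat \<Rightarrow> 'a) \<Rightarrow> 'a \<Rightarrow> bool" where
  "zd_converges d xs x \<longleftrightarrow> (\<lambda>n. d (xs n) x) \<longlonglongrightarrow> 0"

definition zd_convergent :: "('a \<Rightarrow> 'a \<Rightarrow> real) \<Rightarrow> (nat \<Rightarrow> 'a) \<Rightarrow> bool" where
  "zd_convergent d xs \<longleftrightarrow> (\<exists>x. zd_converges d xs x)"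

definition zd_Cauchy :: "('a \<Rightarrow> 'a \<Rightarrow> real) \<Rightarrow> (nat \<Rightarrow> 'a) \<Rightarrow> bool" where
  "zd_Cauchy d xs \<longleftrightarrow> (\<forall>e>0. \<exists>j. \<forall>m n. j \<le> m \<and> m < n \<longrightarrow> d (xs m) (xs n) < e)"

definition zero_complete :: "('a \<Rightarrow> 'a \<Rightarrow> real) \<Rightarrow> bool" where
  "zero_complete d \<longleftrightarrow> (\<forall>xs. zd_Cauchy d xs \<longrightarrow> zd_convergent d xs)"

definition d_singleton :: "('a \<Rightarrow> 'a \<Rightarrow> real) \<Rightarrow> 'a set \<Rightarrow> bool" where
  "d_singleton d Y \<longleftrightarrow> Y \<noteq> {} \<and> (\<forall>y1\<in>Y. \<forall>y2\<in>Y. d y1 y2 = 0)"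

definition Fix_d :: "('a \<Rightarrow> 'a) \<Rightarrow> ('a \<Rightarrow> 'a \<Rightarrow> real) \<Rightarrow> 'a set" where
  "Fix_d T d = {z. d z (T z) = 0}"

definition picard_point :: "('a \<Rightarrow> 'a \<Rightarrow> real) \<Rightarrow> ('a \<Rightarrow> 'a) \<Rightarrow> 'a \<Rightarrow> bool" where
  "picard_point d T x \<longleftrightarrow>
     zd_convergent d (\<lambda>n. (T ^^ n) x) \<and>
     (\<forall>z. zd_converges d (\<lambda>n. (T ^^ n) x) z \<longrightarrow> z \<in> Fix_d T d)"

definition picard_operator :: "('a \<Rightarrow> 'a \<Rightarrow> real) \<Rightarrow> ('a \<Rightarrow> 'a) \<Rightarrow> bool" where
  "picard_operator d T \<longleftrightarrow> (\<forall>x. picard_point d T x)"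

definition global_picard_operator :: "('a \<Rightarrow> 'a \<Rightarrow> real) \<Rightarrow> ('a \<Rightarrow> 'a) \<Rightarrow> bool" where
  "global_picard_operator d T \<longleftrightarrow> picard_operator d T \<and> d_singleton d (Fix_d T d)"

definition d_asymptotic :: "('a \<Rightarrow> 'a \<Rightarrow> real) \<Rightarrow> ('a \<Rightarrow> 'a) \<Rightarrow> bool" where
  "d_asymptotic d T \<longleftrightarrow> (\<forall>x. (\<lambda>n. d ((T ^^ n) x) ((T ^^ Suc n) x)) \<longlonglongrightarrow> 0)"

definition M1 :: "('a \<Rightarrow> 'a \<Rightarrow> real) \<Rightarrow> 'a \<Rightarrow> 'a \<Rightarrow> real" where
  "M1 d x y = d x y"

definition H :: "('a \<Rightarrow> 'a \<Rightarrow> real) \<Rightarrow> ('a \<Rightarrow> 'a) \<Rightarrow> 'a \<Rightarrow> 'a \<Rightarrow> real" where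
  "H d T x y = max (d x (T x)) (d y (T y))"

definition L :: "('a \<Rightarrow> 'a \<Rightarrow> real) \<Rightarrow> ('a \<Rightarrow> 'a) \<Rightarrow> 'a \<Rightarrow> 'a \<Rightarrow> real" where
  "L d T x y = (d x (T y) + d (T x) y) / 2"

definition M2 :: "('a \<Rightarrow> 'a \<Rightarrow> real) \<Rightarrow> ('a \<Rightarrow> 'a) \<Rightarrow> 'a \<Rightarrow> 'a \<Rightarrow> real" where
  "M2 d T x y = max (M1 d x y) (H d T x y)"

definition M3 :: "('a \<Rightarrow> 'a \<Rightarrow> real) \<Rightarrow> ('a \<Rightarrow> 'a) \<Rightarrow> 'a \<Rightarrow> 'a \<Rightarrow> real" where
  "M3 d T x y = max (max (M1 d x y) (H d T x y)) (L d T x y)"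

text \<open>phi : [0,oo) -> [0,oo), represented as a real function; only values on [0,oo) matter.\<close>
definition normal_fun :: "(real \<Rightarrow> real) \<Rightarrow> bool" where
  "normal_fun \<phi> \<longleftrightarrow> (\<forall>t\<ge>0. 0 \<le> \<phi> t) \<and> \<phi> 0 = 0 \<and> (\<forall>t>0. \<phi> t < t)"

definition L_plus :: "(real \<Rightarrow> real) \<Rightarrow> real \<Rightarrow> ereal" where
  "L_plus \<phi> s = max (Limsup (at_right s) (\<lambda>t. ereal (\<phi> t))) (ereal (\<phi> s))"

definition nearly_right_admissible :: "(real \<Rightarrow> real) \<Rightarrow> bool" where
  "nearly_right_admissible \<phi> \<longleftrightarrow> normal_fun \<phi> \<and>
     (\<exists>Q. countable Q \<and> Q \<subseteq> {0<..} \<and> (\<forall>s\<in>{0<..} - Q. L_plus \<phi> s < ereal s))"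

definition contractive :: "('a \<Rightarrow> 'a \<Rightarrow> real) \<Rightarrow> ('a \<Rightarrow> 'a \<Rightarrow> real) \<Rightarrow> (real \<Rightarrow> real) \<Rightarrow> ('a \<Rightarrow> 'a) \<Rightarrow> bool" where
  "contractive d G \<phi> T \<longleftrightarrow> (\<forall>x y. d (T x) (T y) \<le> \<phi> (G x y))"

end

theory Submission
  imports Defs
begin

text \<open>
  Along an orbit \<open>x n = T\<^sup>n x\<close> the steps \<open>d (x n) (x (n+1))\<close> tend to 0. If the orbit
  were not Cauchy, choose a gap \<open>\<epsilon>\<close> outside the countable exceptional set of \<open>\<phi>\<close>, so that
  \<open>\<phi> \<le> c < \<epsilon>\<close> on some interval \<open>[\<epsilon>, b)\<close>. For a late index \<open>m\<close> and the first \<open>n > m\<close>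
  with \<open>d (x m) (x n) \<ge> \<epsilon>\<close>, the value \<open>G (x m) (x n)\<close> lies in \<open>[\<epsilon>, b)\<close>, and the contraction
  gives \<open>d (x m) (x n) \<le> d (x m) (x (m+1)) + c + d (x n) (x (n+1)) < \<epsilon>\<close>, a contradiction.
  By 0-completeness the orbit converges; any limit \<open>z\<close> is \<open>d\<close>-fixed because \<open>G (x n) z\<close> is
  eventually \<open>d (x n) z\<close> or \<open>d z (T z)\<close>, and two \<open>d\<close>-fixed points are at distance 0
  because \<open>\<phi> t < t\<close>.
\<close>

lemma normal_fun_le:
  assumes "normal_fun \<phi>" "0 \<le> t"
  shows "\<phi> t \<le> t"
  using assms by (cases "t = 0") (auto simp: normal_fun_def less_imp_le)

lemma nearly_right_admissible_uniform_bound: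
  assumes "nearly_right_admissible \<phi>" "0 < e"
  obtains \<epsilon> c b where "0 < \<epsilon>" "\<epsilon> \<le> e" "c < \<epsilon>" "\<epsilon> < b" "\<And>t. \<epsilon> \<le> t \<Longrightarrow> t < b \<Longrightarrow> \<phi> t \<le> c"
proof -
  obtain Q where Q: "countable Q" "\<forall>s\<in>{0<..} - Q. L_plus \<phi> s < ereal s"
    using assms(1) by (auto simp: nearly_right_admissible_def)
  have "uncountable {0<..e}"
    using assms(2) by (simp add: uncountable_half_open_interval_2)
  then obtain \<epsilon> where \<epsilon>: "\<epsilon> \<in> {0<..e}" "\<epsilon> \<notin> Q"
    using Q(1) by (metis Diff_eq_empty_iff DiffE countable_subset ex_in_conv)
  then have "L_plus \<phi> \<epsilon> < ereal \<epsilon>"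
    using Q(2) by auto
  then have Lsup: "Limsup (at_right \<epsilon>) (\<lambda>t. ereal (\<phi> t)) < ereal \<epsilon>" and "\<phi> \<epsilon> < \<epsilon>"
    by (auto simp: L_plus_def)
  obtain c where c: "Limsup (at_right \<epsilon>) (\<lambda>t. ereal (\<phi> t)) < ereal c" "c < \<epsilon>"
    using ereal_dense2[OF Lsup] by force
  obtain b where b: "\<epsilon> < b" "\<And>t. \<epsilon> < t \<Longrightarrow> t < b \<Longrightarrow> \<phi> t < c"
    using Limsup_lessD[OF c(1)] unfolding eventually_at_right_field by auto
  have "\<phi> t \<le> max c (\<phi> \<epsilon>)" if "\<epsilon> \<le> t" "t < b" for t
    using b(2)[of t] that by (cases "t = \<epsilon>") auto
  then show ?thesis
    using that[of \<epsilon> "max c (\<phi> \<epsilon>)" b] \<epsilon> c(2) \<open>\<phi> \<epsilon> < \<epsilon>\<close> b(1) by auto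
qed

locale triangular_symmetric =
  fixes d :: "'a \<Rightarrow> 'a \<Rightarrow> real"
  assumes symmetric: "symmetric_on d" and triangular: "triangular d"
begin

lemma nonneg: "0 \<le> d x y"
  using symmetric by (simp add: symmetric_on_def)

lemma commute: "d x y = d y x"
  using symmetric by (simp add: symmetric_on_def)

lemma triangle: "d x z \<le> d x y + d y z"
  using triangular by (simp add: triangular_def)

lemma L_le_dist_add_H: "L d T x y \<le> d x y + H d T x y"
proof -
  have "d x (T y) \<le> d x y + d y (T y)" "d (T x) y \<le> d x (T x) + d x y"
    using triangle[of x "T y" y] triangle[of "T x" y x] commute[of "T x" x] by auto
  then show ?thesis
    by (simp add: L_def H_def)
qed

lemma M3_le_dist_add_H: "M3 d T x y \<le> d x y + H d T x y"
  using L_le_dist_add_H[of T x y] nonneg[of x y] nonneg[of x "T x"]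
  by (auto simp: M3_def M1_def H_def)

lemma M3_le_self_dist:
  assumes "d x z \<le> r" "d (T x) z \<le> r" "d x (T x) \<le> r" "2 * r \<le> d z (T z)"
  shows "M3 d T x z \<le> d z (T z)"
proof -
  have "d x (T z) \<le> d x z + d z (T z)"
    using triangle .
  then have "L d T x z \<le> d z (T z)"
    using assms by (simp add: L_def)
  then show ?thesis
    using assms nonneg[of x z] by (simp add: M3_def M1_def H_def)
qed

end

locale phi_contraction = triangular_symmetric d
  for d :: "'a \<Rightarrow> 'a \<Rightarrow> real" +
  fixes T :: "'a \<Rightarrow> 'a" and G :: "'a \<Rightarrow> 'a \<Rightarrow> real" and \<phi> :: "real \<Rightarrow> real"
  assumes G_choice: "G \<in> {M1 d, M2 d T, M3 d T}"
    and normal: "normal_fun \<phi>"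
    and contraction: "contractive d G \<phi> T"
begin

lemma phi_nonneg: "0 \<le> t \<Longrightarrow> 0 \<le> \<phi> t"
  using normal by (simp add: normal_fun_def)

lemma phi_less: "0 < t \<Longrightarrow> \<phi> t < t"
  using normal by (simp add: normal_fun_def)

lemma dist_T_le: "d (T x) (T y) \<le> \<phi> (G x y)"
  using contraction by (simp add: contractive_def)

lemma dist_le_G: "d x y \<le> G x y"
  using G_choice by (auto simp: M1_def M2_def M3_def)

lemma G_le_M3: "G x y \<le> M3 d T x y"
  using G_choice by (auto simp: M1_def M2_def M3_def)

lemma dist_le_phi_G: "d x y \<le> d x (T x) + \<phi> (G x y) + d y (T y)"
proof -
  have "d x y \<le> d x (T x) + d (T x) y"
    using triangle .
  also have "d (T x) y \<le> d (T x) (T y) + d y (T y)"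
    using triangle[of "T x" y "T y"] commute[of "T y" y] by simp
  finally show ?thesis
    using dist_T_le[of x y] by simp
qed

lemma fixed_points_dist_eq_zero:
  assumes "d u (T u) = 0" "d v (T v) = 0"
  shows "d u v = 0"
proof (rule ccontr)
  assume "d u v \<noteq> 0"
  then have pos: "0 < d u v"
    using nonneg[of u v] by simp
  have "G u v = d u v"
    using dist_le_G[of u v] G_le_M3[of u v] M3_le_dist_add_H[of T u v] assms
    by (simp add: H_def)
  then have "d u v \<le> \<phi> (d u v)"
    using dist_le_phi_G[of u v] assms by simp
  then show False
    using phi_less[OF pos] by simp
qed

lemma orbit_limit_fixed:
  assumes steps: "(\<lambda>n. d ((T ^^ n) x) ((T ^^ Suc n) x)) \<longlonglongrightarrow> 0"
    and lim: "zd_converges d (\<lambda>n. (T ^^ n) x) z"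
  shows "d z (T z) = 0"
proof (rule ccontr)
  define X where "X n = (T ^^ n) x" for n
  define s where "s = d z (T z)"
  define \<delta> where "\<delta> = (s - \<phi> s) / 2"
  assume "d z (T z) \<noteq> 0"
  then have "0 < s"
    using nonneg[of z "T z"] by (simp add: s_def)
  then have "0 < \<delta>" "0 \<le> \<phi> s" "2 * \<delta> \<le> s"
    using phi_less[of s] phi_nonneg[of s] by (auto simp: \<delta>_def)
  have to_z: "(\<lambda>n. d (X n) z) \<longlonglongrightarrow> 0"
    using lim by (simp add: zd_converges_def X_def)
  have "eventually (\<lambda>n. d (X n) z < \<delta> \<and> d (X (Suc n)) z < \<delta> \<and> d (X n) (X (Suc n)) < \<delta>) sequentially"
    using order_tendstoD(2)[OF to_z \<open>0 < \<delta>\<close>] order_tendstoD(2)[OF LIMSEQ_Suc[OF to_z] \<open>0 < \<delta>\<close>]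
      order_tendstoD(2)[OF steps \<open>0 < \<delta>\<close>]
    by (simp add: X_def eventually_conj)
  then obtain n where n: "d (X n) z < \<delta>" "d (T (X n)) z < \<delta>" "d (X n) (T (X n)) < \<delta>"
    by (auto simp: X_def eventually_sequentially)
  have "\<phi> (G (X n) z) \<le> max \<delta> (\<phi> s)"
  proof -
    consider "G = M1 d" | "G = M2 d T \<or> G = M3 d T"
      using G_choice by auto
    then show ?thesis
    proof cases
      case 1
      then show ?thesis
        using normal_fun_le[OF normal nonneg[of "X n" z]] n(1) by (simp add: M1_def)
    next
      case 2
      \<comment> \<open>near the limit, \<open>H\<close> is \<open>d(z, Tz)\<close> and dominates the other terms of \<open>M2, M3\<close>\<close>
      have "G (X n) z \<le> s"
        using G_le_M3[of "X n" z] M3_le_self_dist[of "X n" z \<delta> T] n \<open>2 * \<delta> \<le> s\<close>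
        by (simp add: s_def)
      moreover have "s \<le> G (X n) z"
        using 2 by (auto simp: M2_def M3_def H_def s_def)
      ultimately show ?thesis
        by simp
    qed
  qed
  moreover have "s \<le> d z (T (X n)) + d (T (X n)) (T z)"
    unfolding s_def using triangle .
  ultimately have "s < \<delta> + max \<delta> (\<phi> s)"
    using dist_T_le[of "X n" z] n(2) commute[of z "T (X n)"] by linarith
  moreover have "\<delta> + max \<delta> (\<phi> s) \<le> s"
    using \<open>0 \<le> \<phi> s\<close> phi_less[OF \<open>0 < s\<close>] by (auto simp: \<delta>_def max_def field_simps)
  ultimately show False
    by simp
qed

lemma orbit_zd_Cauchy:
  assumes admissible: "nearly_right_admissible \<phi>"
    and steps: "(\<lambda>n. d ((T ^^ n) x) ((T ^^ Suc n) x)) \<longlonglongrightarrow> 0"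
  shows "zd_Cauchy d (\<lambda>n. (T ^^ n) x)"
proof (rule ccontr)
  define X where "X n = (T ^^ n) x" for n
  define a where "a n = d (X n) (X (Suc n))" for n
  have X_Suc: "X (Suc n) = T (X n)" for n
    by (simp add: X_def)
  assume "\<not> zd_Cauchy d (\<lambda>n. (T ^^ n) x)"
  then obtain e where "0 < e" and gap: "\<And>j. \<exists>m n. j \<le> m \<and> m < n \<and> e \<le> d (X m) (X n)"
    unfolding zd_Cauchy_def X_def by (auto simp: not_less)
  obtain \<epsilon> c b where "0 < \<epsilon>" "\<epsilon> \<le> e" "c < \<epsilon>" "\<epsilon> < b"
    and bound: "\<And>t. \<epsilon> \<le> t \<Longrightarrow> t < b \<Longrightarrow> \<phi> t \<le> c"
    using nearly_right_admissible_uniform_bound[OF admissible \<open>0 < e\<close>] by blast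
  have "0 \<le> c"
    using bound[of \<epsilon>] phi_nonneg[of \<epsilon>] \<open>0 < \<epsilon>\<close> \<open>\<epsilon> < b\<close> by simp
  define \<eta> where "\<eta> = min ((\<epsilon> - c) / 2) ((b - \<epsilon>) / 2)"
  have "0 < \<eta>" "2 * \<eta> \<le> \<epsilon> - c" "2 * \<eta> \<le> b - \<epsilon>"
    using \<open>c < \<epsilon>\<close> \<open>\<epsilon> < b\<close> by (auto simp: \<eta>_def min_def)
  obtain N where N: "\<And>n. N \<le> n \<Longrightarrow> a n < \<eta>"
    using order_tendstoD(2)[OF steps \<open>0 < \<eta>\<close>]
    by (auto simp: a_def X_def eventually_sequentially)
  obtain m n0 where "N \<le> m" "m < n0" "\<epsilon> \<le> d (X m) (X n0)"
    using gap[of N] \<open>\<epsilon> \<le> e\<close> by force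
  then obtain n where n: "m < n" "\<epsilon> \<le> d (X m) (X n)"
    and before: "\<And>k. m < k \<Longrightarrow> k < n \<Longrightarrow> d (X m) (X k) < \<epsilon>"
    using exists_least_iff[of "\<lambda>n. m < n \<and> \<epsilon> \<le> d (X m) (X n)"] by (metis not_less)
  have small: "a m < \<eta>" "a n < \<eta>"
    using N \<open>N \<le> m\<close> \<open>m < n\<close> by auto
  have "n \<noteq> Suc m"
    using n(2) small(1) \<open>0 < \<eta>\<close> \<open>0 \<le> c\<close> \<open>2 * \<eta> \<le> \<epsilon> - c\<close> by (auto simp: a_def)
  then obtain p where "n = Suc p" "m < p"
    using \<open>m < n\<close> by (cases n) auto
  then have "d (X m) (X n) < \<epsilon> + \<eta>"
    using triangle[of "X m" "X n" "X p"] before[of p] N[of p] \<open>N \<le> m\<close> by (simp add: a_def)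
  moreover have "G (X m) (X n) \<le> d (X m) (X n) + max (a m) (a n)"
    using G_le_M3[of "X m" "X n"] M3_le_dist_add_H[of T "X m" "X n"] by (simp add: H_def a_def X_Suc)
  ultimately have "G (X m) (X n) < b"
    using small \<open>2 * \<eta> \<le> b - \<epsilon>\<close> by linarith
  moreover have "\<epsilon> \<le> G (X m) (X n)"
    using dist_le_G[of "X m" "X n"] n(2) by simp
  ultimately have "\<phi> (G (X m) (X n)) \<le> c"
    by (simp add: bound)
  then have "d (X m) (X n) \<le> a m + c + a n"
    using dist_le_phi_G[of "X m" "X n"] by (simp add: a_def X_Suc)
  then show False
    using n(2) small \<open>2 * \<eta> \<le> \<epsilon> - c\<close> by linarith
qed

end

theorem theorem1:
  fixes d :: "'a \<Rightarrow> 'a \<Rightarrow> real" and T :: "'a \<Rightarrow> 'a"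
    and G :: "'a \<Rightarrow> 'a \<Rightarrow> real" and \<phi> :: "real \<Rightarrow> real"
  assumes "symmetric_on d" and "triangular d" and "zero_complete d"
    and "d_asymptotic d T"
    and "G \<in> {M1 d, M2 d T, M3 d T}"
    and "nearly_right_admissible \<phi>"
    and "contractive d G \<phi> T"
  shows "global_picard_operator d T"
proof -
  interpret phi_contraction d T G \<phi>
    using assms by unfold_locales (simp_all add: nearly_right_admissible_def)
  have steps: "(\<lambda>n. d ((T ^^ n) x) ((T ^^ Suc n) x)) \<longlonglongrightarrow> 0" for x
    using \<open>d_asymptotic d T\<close> by (simp add: d_asymptotic_def)
  have picard: "picard_point d T x" for x
    using orbit_zd_Cauchy[OF \<open>nearly_right_admissible \<phi>\<close> steps] orbit_limit_fixed[OF steps]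
      \<open>zero_complete d\<close>
    by (auto simp: picard_point_def zero_complete_def Fix_d_def)
  then have "Fix_d T d \<noteq> {}"
    by (auto simp: picard_point_def zd_convergent_def)
  then show ?thesis
    using picard fixed_points_dist_eq_zero
    by (auto simp: global_picard_operator_def picard_operator_def d_singleton_def Fix_d_def)
qed

end
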